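(* Let $p$ be a probability density on $\mathbb{R}^{d}$, let $z_1, z_2, \dots$ be i.i.d. samples from $p$, let $K$ be a probability density on $\mathbb{R}^{d}$ with $\mathbb{E}_{\xi\sim K}[\xi]=0$ and $\mathbb{E}_{\xi\sim K}[\xi\xi^\top]=I$, and let $(h_n)_{n\ge1}$ be a sequence of positive bandwidths. Let $\Theta$ be a parameter set and $\hat f_\theta:\mathbb{R}^{d}\to(0,\infty)$, $\theta\in\Theta$, a family of positive functions, with $(z,\theta)\mapsto \hat f_\theta(z)$ continuous. Define $$\hat q_n^{(h_n)}(z)=\frac{1}{n}\sum_{i=1}^n \frac{1}{h_n^{d}}K\!\left(\frac{z-z_i}{h_n}\right),\quad l(\theta)=-\int \log\hat f_\theta(z)\,p(z)\,dz,\quad l_n^{(h_n)}(\theta)=-\int \log\hat f_\theta(z)\,\hat q_n^{(h_n)}(z)\,dz.$$ Suppose that for some $\epsilon>0$ there is a constant $B_p^{(\epsilon)}$ with $$\int |\log \hat f_\theta(z)|^{1+\epsilon}\,p(z)\,dz\le B_p^{(\epsilon)}<\infty\quad\text{for all }\theta\in\Theta,$$ and that there is an $n_0$ such that for all $n>n_0$ there is a constant $B_{\hat q}^{(\epsilon)}$ with $$\int |\log \hat f_\theta(z)|^{1+\epsilon}\,\hat q_n^{(h_n)}(z)\,dz\le B_{\hat q}^{(\epsilon)}<\infty\quad\text{for all }\theta\in\Theta,$$ almost surely. Then there is a constant $C_\epsilon$ such that, with probability $1$, for all $n>n_0$, $$\sup_{\theta\in\Theta}\left|l_n^{(h_n)}(\theta)-l(\theta)\right|\le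 C_\epsilon\left(\int\left|\hat q_n^{(h_n)}(z)-p(z)\right|dz\right)^{\frac{\epsilon}{1+\epsilon}}.$$
   Context: This is the setting of maximum likelihood estimation with additive data noise (noise regularization). The data points $z_i\in\mathbb{R}^{d}$, sampled i.i.d. from the unknown true density $p$, are perturbed by independent noise vectors drawn from $K$ and scaled by the bandwidth $h_n$. Drawing a data point uniformly at random and adding $h_n\xi$ with $\xi\sim K$ is the same as sampling from the kernel density estimate $\hat q_n^{(h_n)}$. The quantity $l(\theta)$ is the idealized negative expected log-likelihood under $p$. The quantity $l_n^{(h_n)}(\theta)$ is the negative expected log-likelihood under the kernel density estimate; it is a random quantity because it depends on $z_1,\dots,z_n$. *)

theory Defs
  imports "HOL-Probability.Probability"
begin

text \<open>Kernel density estimate built from the first n samples zs 0, ..., zs (n-1)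
  (corresponding to z_1,...,z_n) with kernel K and bandwidth h, on R^d with d = DIM('a).\<close>
definition kde :: "('a::euclidean_space \<Rightarrow> real) \<Rightarrow> real \<Rightarrow> (nat \<Rightarrow> 'a) \<Rightarrow> nat \<Rightarrow> 'a \<Rightarrow> real" where
  "kde K h zs n z = (1 / real n) * (\<Sum>i<n. (1 / h ^ DIM('a)) * K ((1 / h) *\<^sub>R (z - zs i)))"

definition negll :: "('t \<Rightarrow> 'a::euclidean_space \<Rightarrow> real) \<Rightarrow> ('a \<Rightarrow> real) \<Rightarrow> 't \<Rightarrow> real" where
  "negll f q \<theta> = - (\<integral>z. ln (f \<theta> z) * q z \<partial>lborel)"

end

theory Submission
  imports Defs
begin

(* Write g = ln f_theta, q for the kernel density estimate and S = \<integral> |q - p|.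
   For every threshold T > 0 we have |g| <= T + T^(-eps) |g|^(1+eps), hence
   |l_n(theta) - l(theta)| <= \<integral> |g| |q - p| <= T S + T^(-eps) (B_q + B_p),
   and T = S^(-1/(1+eps)) balances the two terms. *)

lemma nn_integral_lborel_rescale:
  fixes K :: "'a::euclidean_space \<Rightarrow> ennreal"
  assumes K: "K \<in> borel_measurable borel" and h: "h \<noteq> 0"
  shows "(\<integral>\<^sup>+ z. K ((1 / h) *\<^sub>R (z - a)) \<partial>lborel) = ennreal (\<bar>h\<bar> ^ DIM('a)) * (\<integral>\<^sup>+ z. K z \<partial>lborel)"
proof -
  have "(\<integral>\<^sup>+ z. K ((1 / h) *\<^sub>R (z - a)) \<partial>lborel)
      = (\<integral>\<^sup>+ z. K ((1 / h) *\<^sub>R (z - a))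
          \<partial>density (distr lborel borel (\<lambda>x. a + h *\<^sub>R x)) (\<lambda>_. \<bar>h\<bar> ^ DIM('a)))"
    using lborel_affine[OF h, of a] by simp
  also have "\<dots> = (\<integral>\<^sup>+ x. ennreal (\<bar>h\<bar> ^ DIM('a)) * K x \<partial>lborel)"
    using h K by (subst nn_integral_density) (auto simp: nn_integral_distr)
  also have "\<dots> = ennreal (\<bar>h\<bar> ^ DIM('a)) * (\<integral>\<^sup>+ z. K z \<partial>lborel)"
    using K by (simp add: nn_integral_cmult)
  finally show ?thesis .
qed

lemma integrable_lborel_rescale:
  fixes K :: "'a::euclidean_space \<Rightarrow> real"
  assumes K: "integrable lborel K" and h: "h \<noteq> 0"
  shows "integrable lborel (\<lambda>z. K ((1 / h) *\<^sub>R (z - a)))"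
  using K nn_integral_lborel_rescale[of "\<lambda>z. ennreal (norm (K z))", OF _ h]
  unfolding integrable_iff_bounded by (auto simp: ennreal_mult_less_top)

lemma integrable_kde:
  assumes "integrable lborel K" and "h \<noteq> 0"
  shows "integrable lborel (kde K h zs n)"
  unfolding kde_def using integrable_lborel_rescale[OF assms]
  by (intro integrable_mult_right integrable_sum) auto

lemma kde_nonneg:
  assumes "\<And>z. K z \<ge> 0" and "h \<ge> 0"
  shows "kde K h zs n z \<ge> 0"
  unfolding kde_def using assms by (auto intro!: sum_nonneg divide_nonneg_nonneg)

lemma integrable_integral_le_of_nn_integral_le:
  fixes f :: "'a \<Rightarrow> real"
  assumes f: "f \<in> borel_measurable M" "\<And>z. f z \<ge> 0"
    and B: "(\<integral>\<^sup>+ z. ennreal (f z) \<partial>M) \<le> ennreal B"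
  shows "integrable M f" and "integral\<^sup>L M f \<le> max 0 B"
proof -
  show int: "integrable M f"
    using f B by (intro integrableI_nonneg) (auto simp: order.strict_trans1)
  have "ennreal (integral\<^sup>L M f) \<le> ennreal B"
    using B f int by (subst nn_integral_eq_integral[symmetric]) auto
  then show "integral\<^sup>L M f \<le> max 0 B"
    by (smt (verit) ennreal_le_iff2 ennreal_neg)
qed

lemma abs_le_threshold_add_powr:
  fixes g T e :: real
  assumes T: "T > 0" and e: "e > 0"
  shows "\<bar>g\<bar> \<le> T + T powr (-e) * \<bar>g\<bar> powr (1 + e)"
proof (cases "\<bar>g\<bar> \<le> T")
  case True
  then show ?thesis by (smt (verit) mult_nonneg_nonneg powr_ge_zero)
next
  case False
  then have "\<bar>g\<bar> = \<bar>g\<bar> powr (-e) * \<bar>g\<bar> powr (1 + e)"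
    using T by (simp add: powr_add[symmetric])
  also have "\<dots> \<le> T powr (-e) * \<bar>g\<bar> powr (1 + e)"
    using False T e by (intro mult_right_mono powr_mono2') auto
  finally show ?thesis using T by simp
qed

lemma integrable_mult_of_moment:
  fixes g q :: "'a \<Rightarrow> real"
  assumes g: "g \<in> borel_measurable M" and q: "integrable M q" "\<And>z. q z \<ge> 0"
    and moment: "integrable M (\<lambda>z. \<bar>g z\<bar> powr (1 + e) * q z)" and e: "e > 0"
  shows "integrable M (\<lambda>z. g z * q z)"
proof (rule Bochner_Integration.integrable_bound[OF Bochner_Integration.integrable_add[OF q(1) moment]])
  show "(\<lambda>z. g z * q z) \<in> borel_measurable M"
    using g q(1) by measurable
  have "\<bar>g z\<bar> * q z \<le> (1 + \<bar>g z\<bar> powr (1 + e)) * q z" for z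
    using abs_le_threshold_add_powr[of 1 e "g z"] e q(2)[of z] by (intro mult_right_mono) auto
  then show "AE z in M. norm (g z * q z) \<le> norm (q z + \<bar>g z\<bar> powr (1 + e) * q z)"
    using q(2) by (auto simp: abs_mult algebra_simps)
qed

lemma integral_abs_mult_diff_le:
  fixes g q p :: "'a \<Rightarrow> real"
  assumes g: "g \<in> borel_measurable M"
    and q: "integrable M q" "\<And>z. q z \<ge> 0" and p: "integrable M p" "\<And>z. p z \<ge> 0"
    and moment_q: "integrable M (\<lambda>z. \<bar>g z\<bar> powr (1 + e) * q z)"
    and moment_p: "integrable M (\<lambda>z. \<bar>g z\<bar> powr (1 + e) * p z)"
    and e: "e > 0" and T: "T > 0"
  shows "(\<integral>z. \<bar>g z\<bar> * \<bar>q z - p z\<bar> \<partial>M) \<le> T * (\<integral>z. \<bar>q z - p z\<bar> \<partial>M)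
           + T powr (-e) * ((\<integral>z. \<bar>g z\<bar> powr (1 + e) * q z \<partial>M) + (\<integral>z. \<bar>g z\<bar> powr (1 + e) * p z \<partial>M))"
proof -
  define A where "A z = \<bar>g z\<bar> powr (1 + e)" for z
  have "integrable M (\<lambda>z. \<bar>g z * q z - g z * p z\<bar>)"
    using integrable_mult_of_moment[OF g q moment_q e] integrable_mult_of_moment[OF g p moment_p e]
    by auto
  moreover have "(\<lambda>z. \<bar>g z * q z - g z * p z\<bar>) = (\<lambda>z. \<bar>g z\<bar> * \<bar>q z - p z\<bar>)"
    by (auto simp: abs_mult right_diff_distrib[symmetric])
  ultimately have int_gD: "integrable M (\<lambda>z. \<bar>g z\<bar> * \<bar>q z - p z\<bar>)"
    by simp
  have "\<bar>g z\<bar> * \<bar>q z - p z\<bar> \<le> T * \<bar>q z - p z\<bar> + T powr (-e) * (A z * q z + A z * p z)" for z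
  proof -
    have "\<bar>g z\<bar> * \<bar>q z - p z\<bar> \<le> (T + T powr (-e) * A z) * \<bar>q z - p z\<bar>"
      using abs_le_threshold_add_powr[OF T e, of "g z"] by (intro mult_right_mono) (auto simp: A_def)
    also have "\<dots> = T * \<bar>q z - p z\<bar> + T powr (-e) * (A z * \<bar>q z - p z\<bar>)"
      by (simp add: algebra_simps)
    also have "\<dots> \<le> T * \<bar>q z - p z\<bar> + T powr (-e) * (A z * (q z + p z))"
      using q(2)[of z] p(2)[of z] by (intro add_left_mono mult_left_mono) (auto simp: A_def)
    finally show ?thesis by (simp add: distrib_left)
  qed
  then have "(\<integral>z. \<bar>g z\<bar> * \<bar>q z - p z\<bar> \<partial>M)
      \<le> (\<integral>z. T * \<bar>q z - p z\<bar> + T powr (-e) * (A z * q z + A z * p z) \<partial>M)"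
    using int_gD q(1) p(1) moment_q moment_p by (intro integral_mono) (auto simp: A_def)
  then show ?thesis
    using q(1) p(1) moment_q moment_p by (simp add: A_def)
qed

lemma abs_integral_diff_le_L1_powr:
  fixes g q p :: "'a \<Rightarrow> real"
  assumes g: "g \<in> borel_measurable M"
    and q: "integrable M q" "\<And>z. q z \<ge> 0" and p: "integrable M p" "\<And>z. p z \<ge> 0"
    and e: "e > 0"
    and Bq: "(\<integral>\<^sup>+ z. ennreal (\<bar>g z\<bar> powr (1 + e) * q z) \<partial>M) \<le> ennreal Bq"
    and Bp: "(\<integral>\<^sup>+ z. ennreal (\<bar>g z\<bar> powr (1 + e) * p z) \<partial>M) \<le> ennreal Bp"
  shows "\<bar>(\<integral>z. g z * q z \<partial>M) - (\<integral>z. g z * p z \<partial>M)\<bar>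
      \<le> (1 + max 0 Bp + max 0 Bq) * (\<integral>z. \<bar>q z - p z\<bar> \<partial>M) powr (e / (1 + e))"
proof -
  define S where "S = (\<integral>z. \<bar>q z - p z\<bar> \<partial>M)"
  have "(\<lambda>z. \<bar>g z\<bar> powr (1 + e) * q z) \<in> borel_measurable M"
    and "(\<lambda>z. \<bar>g z\<bar> powr (1 + e) * p z) \<in> borel_measurable M"
    using g q(1) p(1) by measurable
  note moment_q = integrable_integral_le_of_nn_integral_le[OF this(1) _ Bq]
   and moment_p = integrable_integral_le_of_nn_integral_le[OF this(2) _ Bp]
  have int_gq: "integrable M (\<lambda>z. g z * q z)" and int_gp: "integrable M (\<lambda>z. g z * p z)"
    using q(2) p(2) by (auto intro!: integrable_mult_of_moment[OF g] q p moment_q moment_p e)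
  have "S \<ge> 0"
    unfolding S_def by simp
  then consider "S = 0" | "S > 0"
    by linarith
  then show ?thesis
  proof cases
    case 1
    then have "AE z in M. q z = p z"
      using integral_nonneg_eq_0_iff_AE[of M "\<lambda>z. \<bar>q z - p z\<bar>"] q(1) p(1) by (auto simp: S_def)
    then have "(\<integral>z. g z * q z \<partial>M) = (\<integral>z. g z * p z \<partial>M)"
      using int_gq int_gp by (intro integral_cong_AE) auto
    then show ?thesis
      by simp
  next
    case 2
    define T where "T = S powr (- 1 / (1 + e))"
    have "T > 0"
      using 2 by (simp add: T_def)
    have "T * S = S powr (- 1 / (1 + e) + 1)"
      using 2 powr_add[of S "- 1 / (1 + e)" 1] by (simp add: T_def)
    also have "- 1 / (1 + e) + 1 = e / (1 + e)"
      using e by (simp add: field_simps)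
    finally have T_S: "T * S = S powr (e / (1 + e))" .
    have T_e: "T powr (-e) = S powr (e / (1 + e))"
      using 2 e by (simp add: T_def powr_powr)
    have "\<bar>(\<integral>z. g z * q z \<partial>M) - (\<integral>z. g z * p z \<partial>M)\<bar> \<le> (\<integral>z. \<bar>g z * q z - g z * p z\<bar> \<partial>M)"
      using int_gq int_gp integral_abs_bound[of M "\<lambda>z. g z * q z - g z * p z"] by simp
    also have "\<dots> = (\<integral>z. \<bar>g z\<bar> * \<bar>q z - p z\<bar> \<partial>M)"
      by (rule Bochner_Integration.integral_cong) (auto simp: abs_mult right_diff_distrib[symmetric])
    also have "\<dots> \<le> T * S + T powr (-e) * ((\<integral>z. \<bar>g z\<bar> powr (1 + e) * q z \<partial>M)
                                          + (\<integral>z. \<bar>g z\<bar> powr (1 + e) * p z \<partial>M))"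
      unfolding S_def
      by (rule integral_abs_mult_diff_le[OF g q p moment_q(1) moment_p(1) e \<open>T > 0\<close>]) (use q p in auto)
    also have "\<dots> \<le> T * S + T powr (-e) * (max 0 Bq + max 0 Bp)"
      using moment_q(2) moment_p(2) q(2) p(2) by (intro add_left_mono mult_left_mono add_mono) auto
    also have "\<dots> = (1 + max 0 Bp + max 0 Bq) * S powr (e / (1 + e))"
      unfolding T_S T_e by (simp add: algebra_simps)
    finally show ?thesis
      unfolding S_def .
  qed
qed

lemma borel_measurable_continuous_on_section:
  fixes f :: "'t::topological_space \<Rightarrow> 'a::topological_space \<Rightarrow> 'b::topological_space"
  assumes "continuous_on (UNIV \<times> \<Theta>) (\<lambda>(z, \<theta>). f \<theta> z)" and "\<theta> \<in> \<Theta>"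
  shows "f \<theta> \<in> borel_measurable borel"
proof -
  have "continuous_on UNIV (\<lambda>z. (\<lambda>(z, \<theta>). f \<theta> z) (z, \<theta>))"
    by (rule continuous_on_compose2[OF assms(1)]) (use assms(2) in \<open>auto intro!: continuous_intros\<close>)
  then show ?thesis
    by (intro borel_measurable_continuous_onI) simp
qed

theorem lemma1:
  fixes M :: "'w measure"
    and Z :: "nat \<Rightarrow> 'w \<Rightarrow> 'a::euclidean_space"
    and p K :: "'a \<Rightarrow> real"
    and h :: "nat \<Rightarrow> real"
    and \<Theta> :: "'t::topological_space set"
    and f :: "'t \<Rightarrow> 'a \<Rightarrow> real"
    and \<epsilon> Bp Bq :: real
    and n0 :: nat
  assumes M: "prob_space M"
    and p_meas: "p \<in> borel_measurable lborel"
    and p_nonneg: "\<And>z. p z \<ge> 0"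
    and p_int: "(\<integral>\<^sup>+ z. ennreal (p z) \<partial>lborel) = 1"
    and Z_indep: "prob_space.indep_vars M (\<lambda>_. borel) Z UNIV"
    and Z_distr: "\<And>i. distributed M lborel (Z i) (\<lambda>z. ennreal (p z))"
    and K_meas: "K \<in> borel_measurable lborel"
    and K_nonneg: "\<And>z. K z \<ge> 0"
    and K_int: "(\<integral>\<^sup>+ z. ennreal (K z) \<partial>lborel) = 1"
    and K_mean_int: "integrable lborel (\<lambda>x. K x *\<^sub>R x)"
    and K_mean: "(\<integral>x. K x *\<^sub>R x \<partial>lborel) = 0"
    and K_cov_int: "\<And>i j. i \<in> Basis \<Longrightarrow> j \<in> Basis \<Longrightarrow>
                       integrable lborel (\<lambda>x. K x * ((x \<bullet> i) * (x \<bullet> j)))"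
    and K_cov: "\<And>i j. i \<in> Basis \<Longrightarrow> j \<in> Basis \<Longrightarrow>
                   (\<integral>x. K x * ((x \<bullet> i) * (x \<bullet> j)) \<partial>lborel) = (if i = j then 1 else 0)"
    and h_pos: "\<And>n. n \<ge> 1 \<Longrightarrow> h n > 0"
    and f_pos: "\<And>\<theta> z. \<theta> \<in> \<Theta> \<Longrightarrow> f \<theta> z > 0"
    and f_cont: "continuous_on (UNIV \<times> \<Theta>) (\<lambda>(z, \<theta>). f \<theta> z)"
    and eps: "\<epsilon> > 0"
    and Bp: "\<And>\<theta>. \<theta> \<in> \<Theta> \<Longrightarrow>
              (\<integral>\<^sup>+ z. ennreal (\<bar>ln (f \<theta> z)\<bar> powr (1 + \<epsilon>) * p z) \<partial>lborel) \<le> ennreal Bp"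
    and Bq: "AE \<omega> in M. \<forall>n > n0. \<forall>\<theta> \<in> \<Theta>.
              (\<integral>\<^sup>+ z. ennreal (\<bar>ln (f \<theta> z)\<bar> powr (1 + \<epsilon>) * kde K (h n) (\<lambda>i. Z i \<omega>) n z) \<partial>lborel)
                \<le> ennreal Bq"
  shows "\<exists>C::real. AE \<omega> in M. \<forall>n > n0. \<forall>\<theta> \<in> \<Theta>.
           \<bar>negll f (kde K (h n) (\<lambda>i. Z i \<omega>) n) \<theta> - negll f p \<theta>\<bar>
             \<le> C * (\<integral>z. \<bar>kde K (h n) (\<lambda>i. Z i \<omega>) n z - p z\<bar> \<partial>lborel) powr (\<epsilon> / (1 + \<epsilon>))"
proof -
  have p_integrable: "integrable lborel p"
    using p_meas p_nonneg p_int by (intro integrableI_nonneg) auto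
  have K_integrable: "integrable lborel K"
    using K_meas K_nonneg K_int by (intro integrableI_nonneg) auto
  have h_after_n0: "h n \<noteq> 0" "h n \<ge> 0" if "n > n0" for n
    using h_pos[of n] that by simp_all
  define C where "C = 1 + max 0 Bp + max 0 Bq"
  have negll_bound: "\<bar>negll f q \<theta> - negll f p \<theta>\<bar>
      \<le> C * (\<integral>z. \<bar>q z - p z\<bar> \<partial>lborel) powr (\<epsilon> / (1 + \<epsilon>))"
    if "integrable lborel q" "\<And>z. q z \<ge> 0" "\<theta> \<in> \<Theta>"
      and "(\<integral>\<^sup>+ z. ennreal (\<bar>ln (f \<theta> z)\<bar> powr (1 + \<epsilon>) * q z) \<partial>lborel) \<le> ennreal Bq" for q \<theta>
    using abs_integral_diff_le_L1_powr[OF _ that(1,2) p_integrable p_nonneg eps that(4) Bp[OF that(3)]]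
      borel_measurable_continuous_on_section[OF f_cont that(3)]
    by (simp add: C_def negll_def abs_minus_commute)
  have "AE \<omega> in M. \<forall>n > n0. \<forall>\<theta> \<in> \<Theta>.
           \<bar>negll f (kde K (h n) (\<lambda>i. Z i \<omega>) n) \<theta> - negll f p \<theta>\<bar>
             \<le> C * (\<integral>z. \<bar>kde K (h n) (\<lambda>i. Z i \<omega>) n z - p z\<bar> \<partial>lborel) powr (\<epsilon> / (1 + \<epsilon>))"
    using Bq by eventually_elim
      (auto intro!: negll_bound integrable_kde kde_nonneg K_integrable K_nonneg simp: h_after_n0)
  then show ?thesis
    by blast
qed

end
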